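(* For every starting point $\mathbf{x}^{(0)}\in\Delta_n$, the trajectory $\mathbf{x}^{(t)}=g^t(\mathbf{x}^{(0)})$ converges as $t\to\infty$, and its limit is a fixed point of $g$.
   Context: $G=(V,E)$ is a finite undirected graph with $n$ vertices, $N_u$ the neighbourhood of $u$, $\Delta_n=\{\mathbf{x}\in\mathbb{R}^n_{\ge 0}:\sum_v\mathbf{x}_v=1\}$. For every edge $uv\in E$, $F_{uv}=F_{vu}:[-1,1]\to[-1,1]$ is continuously differentiable, $F_{uv}(0)=0$, increasing and odd. The map $g:\Delta_n\to\Delta_n$ is $g(\mathbf{x})_u=\mathbf{x}_u+\sum_{v\in N_u}\mathbf{x}_u\mathbf{x}_vF_{uv}(\mathbf{x}_u-\mathbf{x}_v)$; a fixed point is $\mathbf{p}$ with $g(\mathbf{p})=\mathbf{p}$. *)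

theory Defs
  imports "HOL-Analysis.Analysis"
begin

text \<open>Vertices are the elements of a finite type 'n (so n = CARD('n)); points of R^n are
  vectors of type real^'n. The graph is given by a symmetric edge relation E.\<close>

definition prob_simplex :: "(real ^ 'n::finite) set" where
  "prob_simplex = {x. (\<forall>v. 0 \<le> x $ v) \<and> (\<Sum>v\<in>UNIV. x $ v) = 1}"

definition nbhd :: "('n \<Rightarrow> 'n \<Rightarrow> bool) \<Rightarrow> 'n \<Rightarrow> 'n set" where
  "nbhd E u = {v. E u v}"

definition gmap :: "('n::finite \<Rightarrow> 'n \<Rightarrow> bool) \<Rightarrow> ('n \<Rightarrow> 'n \<Rightarrow> real \<Rightarrow> real)
                    \<Rightarrow> real ^ 'n \<Rightarrow> real ^ 'n" where
  "gmap E F x = (\<chi> u. x $ u + (\<Sum>v\<in>nbhd E u. x $ u * x $ v * F u v (x $ u - x $ v)))"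

text \<open>Continuously differentiable on the closed interval S (one-sided derivatives at the
  endpoints, i.e. derivatives taken within S).\<close>
definition C1_on_interval :: "(real \<Rightarrow> real) \<Rightarrow> real set \<Rightarrow> bool" where
  "C1_on_interval f S \<longleftrightarrow>
     (\<exists>D. (\<forall>t\<in>S. (f has_real_derivative D t) (at t within S)) \<and> continuous_on S D)"

end

theory Submission
  imports Defs
begin

text \<open>
  The flow \<open>x\<^sub>u x\<^sub>v F\<^sub>u\<^sub>v(x\<^sub>u - x\<^sub>v)\<close> along an edge is antisymmetric and runs towards the
  larger coordinate. Hence \<open>\<Sum>\<^sub>u s\<^sub>u (g(x)\<^sub>u - x\<^sub>u) \<ge> 0\<close> for every weight \<open>s\<close> that is monotone in
  \<open>x\<close>. The weights \<open>s\<^sub>u = [x\<^sub>u > c]\<close> make every hinge sum \<open>\<Sum>\<^sub>u max (x\<^sub>u - c) 0\<close> nondecreasing,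
  hence convergent, along a trajectory; the weights \<open>s = x\<close> show that \<open>\<Sum>\<^sub>u x\<^sub>u\<^sup>2\<close> grows by at
  least the square of each coordinate step, so the steps tend to \<open>0\<close>. A coordinate oscillating
  across an interval would then, by its small steps, come infinitely often close to every
  point of the interval; but tent functions are second differences of hinge functions, so
  their sums converge, and too many tents would then carry too much mass. Thus every
  coordinate converges, and by continuity of \<open>g\<close> the limit is a fixed point.
\<close>

lemma frequently_near_if_oscillating:
  fixes y :: "nat \<Rightarrow> real"
  assumes steps: "(\<lambda>t. y (Suc t) - y t) \<longlonglongrightarrow> 0"
    and below: "\<exists>\<^sub>F t in sequentially. y t < a"
    and above: "\<exists>\<^sub>F t in sequentially. b < y t"
    and c: "a \<le> c" "c \<le> b" and "0 < \<theta>"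
  shows "\<exists>\<^sub>F t in sequentially. \<bar>y t - c\<bar> < \<theta>"
proof (rule ccontr)
  assume "\<not> ?thesis"
  moreover have "\<forall>\<^sub>F t in sequentially. \<bar>y (Suc t) - y t\<bar> < \<theta>"
    using steps \<open>0 < \<theta>\<close> by (auto simp: tendsto_iff dist_real_def)
  ultimately have "\<forall>\<^sub>F t in sequentially. \<theta> \<le> \<bar>y t - c\<bar> \<and> \<bar>y (Suc t) - y t\<bar> < \<theta>"
    by (auto simp: not_frequently not_less elim: eventually_elim2)
  then obtain M where M: "\<And>t. M \<le> t \<Longrightarrow> \<theta> \<le> \<bar>y t - c\<bar> \<and> \<bar>y (Suc t) - y t\<bar> < \<theta>"
    by (auto simp: eventually_sequentially)
  obtain t1 where t1: "M \<le> t1" "y t1 < a" using below by (auto simp: frequently_sequentially)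
  obtain t2 where t2: "t1 \<le> t2" "b < y t2" using above by (auto simp: frequently_sequentially)
  \<comment> \<open>steps shorter than \<open>\<theta>\<close> cannot jump over the excluded window around \<open>c\<close>\<close>
  have "y (t1 + k) < c" for k
  proof (induction k)
    case 0
    then show ?case using t1 c by simp
  next
    case (Suc k)
    then show ?case using M[of "t1 + k"] M[of "Suc (t1 + k)"] t1 by auto
  qed
  from this[of "t2 - t1"] t2 c show False by simp
qed

lemma Bseq_convergent_if_not_oscillating:
  fixes y :: "nat \<Rightarrow> real"
  assumes "Bseq y"
    and not_oscillating: "\<And>a b. a < b \<Longrightarrow> \<exists>\<^sub>F t in sequentially. y t < a
                                  \<Longrightarrow> \<exists>\<^sub>F t in sequentially. b < y t \<Longrightarrow> False"
  shows "convergent y"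
proof -
  define Y where "Y t = ereal (y t)" for t
  define li where "li = Liminf sequentially Y"
  define ls where "ls = Limsup sequentially Y"
  have "\<not> li < ls"
  proof
    assume "li < ls"
    then obtain a where a: "li < ereal a" "ereal a < ls" using ereal_dense2 by blast
    then obtain b where b: "a < b" "ereal b < ls" using ereal_dense2 by force
    have "\<not> ereal a \<le> li" using a(1) by simp
    then obtain r where r: "r < ereal a" "\<not> (\<forall>\<^sub>F t in sequentially. r < Y t)"
      unfolding li_def le_Liminf_iff by auto
    have "\<exists>\<^sub>F t in sequentially. y t < a"
      using r(2) unfolding not_eventually
    proof (rule frequently_elim1)
      fix t assume "\<not> r < Y t"
      then have "Y t < ereal a" using r(1) by (meson not_less le_less_trans)
      then show "y t < a" by (simp add: Y_def)
    qed
    have "\<not> ls \<le> ereal b" using b(2) by simp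
    then obtain r' where r': "ereal b < r'" "\<not> (\<forall>\<^sub>F t in sequentially. Y t < r')"
      unfolding ls_def Limsup_le_iff by auto
    have "\<exists>\<^sub>F t in sequentially. b < y t"
      using r'(2) unfolding not_eventually
    proof (rule frequently_elim1)
      fix t assume "\<not> Y t < r'"
      then have "ereal b < Y t" using r'(1) by (meson not_less less_le_trans)
      then show "b < y t" by (simp add: Y_def)
    qed
    with \<open>\<exists>\<^sub>F t in sequentially. y t < a\<close> show False using not_oscillating b(1) by blast
  qed
  then have "li = ls" using Liminf_le_Limsup[OF sequentially_bot, of Y] by (simp add: li_def ls_def)
  then have "Y \<longlonglongrightarrow> li"
    by (intro Liminf_eq_Limsup) (simp_all add: li_def ls_def)
  moreover obtain K where K: "\<forall>t. norm (y t) \<le> K" using \<open>Bseq y\<close> BseqE by blast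
  have "- K \<le> y t" "y t \<le> K" for t using K[rule_format, of t] by auto
  then have "ereal (- K) \<le> li" "ls \<le> ereal K" unfolding li_def ls_def
    by (auto intro!: Liminf_bounded Limsup_bounded always_eventually simp: Y_def)
  ultimately obtain l where "Y \<longlonglongrightarrow> ereal l"
    using \<open>li = ls\<close> by (cases li) auto
  then have "y \<longlonglongrightarrow> l" by (simp add: Y_def[abs_def])
  then show ?thesis by (auto simp: convergent_def)
qed

definition tent :: "real \<Rightarrow> real \<Rightarrow> real \<Rightarrow> real" where
  "tent \<eta> c s = max 0 (\<eta> - \<bar>s - c\<bar>)"

lemma tent_eq_hinge_second_difference:
  "0 < \<eta> \<Longrightarrow> tent \<eta> c s = max (s - (c - \<eta>)) 0 - 2 * max (s - c) 0 + max (s - (c + \<eta>)) 0"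
  by (auto simp: tent_def max_def abs_if)

lemma sum_tent_spaced_le:
  assumes "0 < \<eta>"
  shows "(\<Sum>i\<le>N. tent \<eta> (a + real i * (2 * \<eta>)) s) \<le> \<eta>"
proof -
  define S where "S = {i. i \<le> N \<and> \<bar>s - (a + real i * (2 * \<eta>))\<bar> < \<eta>}"
  \<comment> \<open>the supports of tents spaced \<open>2 \<eta>\<close> apart are disjoint\<close>
  have "card S \<le> 1"
  proof -
    have "\<forall>i\<in>S. \<forall>j\<in>S. i = j"
    proof (intro ballI)
      fix i j assume "i \<in> S" "j \<in> S"
      then have "\<bar>real i * (2 * \<eta>) - real j * (2 * \<eta>)\<bar> < 2 * \<eta>" by (auto simp: S_def)
      then have "\<bar>real i - real j\<bar> * (2 * \<eta>) < 1 * (2 * \<eta>)"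
        using assms by (simp only: left_diff_distrib[symmetric] abs_mult)
      then have "\<bar>real i - real j\<bar> < 1" by (rule mult_right_less_imp_less) (use assms in simp)
      then show "i = j" by linarith
    qed
    then show ?thesis using card_le_Suc0_iff_eq[of S] by (simp add: S_def)
  qed
  have "(\<Sum>i\<le>N. tent \<eta> (a + real i * (2 * \<eta>)) s) = (\<Sum>i\<in>S. tent \<eta> (a + real i * (2 * \<eta>)) s)"
    by (rule sum.mono_neutral_right) (auto simp: S_def tent_def)
  also have "\<dots> \<le> real (card S) * \<eta>"
    by (rule sum_bounded_above) (auto simp: tent_def assms less_imp_le)
  also have "\<dots> \<le> \<eta>"
    using \<open>card S \<le> 1\<close> assms by (simp add: mult_le_cancel_right1)
  finally show ?thesis .
qed

lemma tendsto_ge_if_frequently_ge: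
  fixes f :: "nat \<Rightarrow> real"
  assumes "f \<longlonglongrightarrow> l" "\<exists>\<^sub>F t in sequentially. c \<le> f t"
  shows "c \<le> l"
proof (rule ccontr)
  assume "\<not> c \<le> l"
  then have "\<forall>\<^sub>F t in sequentially. f t < c" using order_tendstoD(2)[OF assms(1)] by simp
  then show False using assms(2) by (simp add: frequently_def not_le)
qed

lemma tent_sum_tendsto_if_hinge_sums_tendsto:
  fixes z :: "nat \<Rightarrow> real ^ 'n::finite"
  assumes L: "\<And>c. (\<lambda>t. \<Sum>w\<in>UNIV. max (z t $ w - c) 0) \<longlonglongrightarrow> L c" and "0 < \<eta>"
  shows "(\<lambda>t. \<Sum>w\<in>UNIV. tent \<eta> d (z t $ w)) \<longlonglongrightarrow> L (d - \<eta>) - 2 * L d + L (d + \<eta>)"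
proof -
  have "(\<lambda>t. \<Sum>w\<in>UNIV. tent \<eta> d (z t $ w))
      = (\<lambda>t. (\<Sum>w\<in>UNIV. max (z t $ w - (d - \<eta>)) 0) - 2 * (\<Sum>w\<in>UNIV. max (z t $ w - d) 0)
              + (\<Sum>w\<in>UNIV. max (z t $ w - (d + \<eta>)) 0))"
    by (simp add: tent_eq_hinge_second_difference[OF \<open>0 < \<eta>\<close>] fun_eq_iff
        sum.distrib sum_subtractf sum_distrib_left)
  then show ?thesis by (simp only:) (intro tendsto_intros L)
qed

lemma sum_spaced_tent_sums_le:
  fixes z :: "real ^ 'n::finite"
  assumes "0 < \<eta>"
  shows "(\<Sum>i\<le>N. \<Sum>w\<in>UNIV. tent \<eta> (a + real i * (2 * \<eta>)) (z $ w)) \<le> real CARD('n) * \<eta>"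
proof -
  have "(\<Sum>i\<le>N. \<Sum>w\<in>UNIV. tent \<eta> (a + real i * (2 * \<eta>)) (z $ w))
      = (\<Sum>w\<in>UNIV. \<Sum>i\<le>N. tent \<eta> (a + real i * (2 * \<eta>)) (z $ w))"
    by (rule sum.swap)
  also have "\<dots> \<le> (\<Sum>w\<in>(UNIV::'n set). \<eta>)"
    by (rule sum_mono) (rule sum_tent_spaced_le[OF assms])
  finally show ?thesis by simp
qed

lemma no_recurrent_interval_if_hinge_sums_convergent:
  fixes z :: "nat \<Rightarrow> real ^ 'n::finite"
  assumes hinge: "\<And>c. convergent (\<lambda>t. \<Sum>w\<in>UNIV. max (z t $ w - c) 0)"
    and "a < b"
    and recurrent: "\<And>c \<theta>. a \<le> c \<Longrightarrow> c \<le> b \<Longrightarrow> 0 < \<theta> \<Longrightarrow> \<exists>\<^sub>F t in sequentially. \<bar>z t $ u - c\<bar> < \<theta>"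
  shows False
proof -
  \<comment> \<open>Each of the \<open>N + 1\<close> tents centred at the points \<open>c i\<close> has limiting mass at least \<open>\<eta> - \<theta>\<close>,
    but disjoint supports limit their total mass to \<open>N \<eta>\<close>.\<close>
  obtain L where L: "\<And>c. (\<lambda>t. \<Sum>w\<in>UNIV. max (z t $ w - c) 0) \<longlonglongrightarrow> L c"
    using hinge unfolding convergent_def by metis
  define N where "N = CARD('n)"
  define \<eta> where "\<eta> = (b - a) / (2 * real N)"
  define \<theta> where "\<theta> = \<eta> / (real N + 2)"
  define c where "c i = a + real i * (2 * \<eta>)" for i :: nat
  define T where "T d t = (\<Sum>w\<in>UNIV. tent \<eta> d (z t $ w))" for d t
  have "0 < N" by (simp add: N_def)
  then have "0 < \<eta>" "0 < \<theta>" using \<open>a < b\<close> by (simp_all add: \<eta>_def \<theta>_def)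
  have c_in: "a \<le> c i \<and> c i \<le> b" if "i \<le> N" for i
  proof -
    have "real i * (2 * \<eta>) \<le> real N * (2 * \<eta>)" using that \<open>0 < \<eta>\<close> by simp
    also have "\<dots> = b - a" using \<open>0 < N\<close> by (simp add: \<eta>_def)
    finally show ?thesis using \<open>0 < \<eta>\<close> by (simp add: c_def)
  qed
  define \<tau> where "\<tau> d = L (d - \<eta>) - 2 * L d + L (d + \<eta>)" for d
  have T_lim: "T d \<longlonglongrightarrow> \<tau> d" for d
    unfolding T_def \<tau>_def by (rule tent_sum_tendsto_if_hinge_sums_tendsto[OF L \<open>0 < \<eta>\<close>])
  have lower: "\<eta> - \<theta> \<le> \<tau> (c i)" if "i \<le> N" for i
  proof (rule tendsto_ge_if_frequently_ge[OF T_lim])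
    have "\<exists>\<^sub>F t in sequentially. \<bar>z t $ u - c i\<bar> < \<theta>"
      using recurrent c_in[OF that] \<open>0 < \<theta>\<close> by blast
    then show "\<exists>\<^sub>F t in sequentially. \<eta> - \<theta> \<le> T (c i) t"
    proof (rule frequently_elim1)
      fix t assume "\<bar>z t $ u - c i\<bar> < \<theta>"
      then have "\<eta> - \<theta> \<le> tent \<eta> (c i) (z t $ u)" by (simp add: tent_def)
      also have "\<dots> \<le> T (c i) t" unfolding T_def by (rule member_le_sum) (auto simp: tent_def)
      finally show "\<eta> - \<theta> \<le> T (c i) t" .
    qed
  qed
  have "(real N + 1) * (\<eta> - \<theta>) = (\<Sum>i\<le>N. \<eta> - \<theta>)" by simp
  also have "\<dots> \<le> (\<Sum>i\<le>N. \<tau> (c i))" by (rule sum_mono) (simp add: lower)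
  also have "\<dots> \<le> real N * \<eta>"
  proof (rule tendsto_le[OF sequentially_bot tendsto_const])
    show "(\<lambda>t. \<Sum>i\<le>N. T (c i) t) \<longlonglongrightarrow> (\<Sum>i\<le>N. \<tau> (c i))" by (intro tendsto_sum T_lim)
  qed (simp add: T_def c_def N_def sum_spaced_tent_sums_le[OF \<open>0 < \<eta>\<close>])
  finally have "(real N + 1) * (\<eta> - \<theta>) \<le> real N * \<eta>" .
  moreover have "(real N + 1) * \<theta> < \<eta>"
    using \<open>0 < \<eta>\<close> by (simp add: \<theta>_def field_simps)
  moreover have "(real N + 1) * (\<eta> - \<theta>) = real N * \<eta> + (\<eta> - (real N + 1) * \<theta>)"
    by (simp add: algebra_simps)
  ultimately show False by linarith
qed

lemma convergent_coordinate_if_hinge_sums_convergent: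
  fixes z :: "nat \<Rightarrow> real ^ 'n::finite"
  assumes hinge: "\<And>c. convergent (\<lambda>t. \<Sum>w\<in>UNIV. max (z t $ w - c) 0)"
    and bounded: "Bseq (\<lambda>t. z t $ u)"
    and steps: "(\<lambda>t. z (Suc t) $ u - z t $ u) \<longlonglongrightarrow> 0"
  shows "convergent (\<lambda>t. z t $ u)"
proof (rule Bseq_convergent_if_not_oscillating[OF bounded])
  fix a b :: real
  assume "a < b" and below: "\<exists>\<^sub>F t in sequentially. z t $ u < a"
    and above: "\<exists>\<^sub>F t in sequentially. b < z t $ u"
  show False
  proof (rule no_recurrent_interval_if_hinge_sums_convergent[OF hinge \<open>a < b\<close>])
    fix c \<theta> :: real
    assume "a \<le> c" "c \<le> b" "0 < \<theta>"
    then show "\<exists>\<^sub>F t in sequentially. \<bar>z t $ u - c\<bar> < \<theta>"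
      using frequently_near_if_oscillating[OF steps below above] by blast
  qed
qed

lemma prob_simplex_nonneg: "x \<in> prob_simplex \<Longrightarrow> 0 \<le> x $ u"
  by (simp add: prob_simplex_def)

lemma prob_simplex_sum: "x \<in> prob_simplex \<Longrightarrow> (\<Sum>v\<in>UNIV. x $ v) = 1"
  by (simp add: prob_simplex_def)

lemma prob_simplex_le_one:
  assumes "x \<in> prob_simplex" shows "x $ u \<le> 1"
proof -
  have "x $ u \<le> (\<Sum>v\<in>UNIV. x $ v)"
    by (rule member_le_sum) (simp_all add: prob_simplex_nonneg[OF assms])
  then show ?thesis by (simp add: prob_simplex_sum[OF assms])
qed

lemma prob_simplex_diff_in_interval: "x \<in> prob_simplex \<Longrightarrow> x $ u - x $ v \<in> {-1..1}"
  using prob_simplex_nonneg[of x u] prob_simplex_nonneg[of x v]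
    prob_simplex_le_one[of x u] prob_simplex_le_one[of x v] by auto

lemma closed_prob_simplex: "closed prob_simplex"
  unfolding prob_simplex_def
  by (intro closed_Collect_conj closed_Collect_all closed_Collect_le closed_Collect_eq continuous_intros)

lemma sum_nbhd_antisymmetric:
  fixes f :: "'a::finite \<Rightarrow> 'a \<Rightarrow> real"
  assumes sym: "\<And>u v. E u v \<Longrightarrow> E v u"
    and antisym: "\<And>u v. E u v \<Longrightarrow> f v u = - f u v"
  shows "2 * (\<Sum>u\<in>UNIV. s u * (\<Sum>v\<in>nbhd E u. f u v))
           = (\<Sum>u\<in>UNIV. \<Sum>v\<in>nbhd E u. (s u - s v) * f u v)"
proof -
  have nbhd_sum: "(\<Sum>v\<in>nbhd E u. h v) = (\<Sum>v\<in>UNIV. if E u v then h v else 0)"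
    for u and h :: "'a \<Rightarrow> real"
    by (simp add: nbhd_def sum.inter_filter[symmetric])
  define A where "A = (\<Sum>u\<in>UNIV. \<Sum>v\<in>UNIV. if E u v then s u * f u v else 0)"
  have A_eq: "A = (\<Sum>u\<in>UNIV. s u * (\<Sum>v\<in>nbhd E u. f u v))"
    unfolding A_def nbhd_sum sum_distrib_left by (intro sum.cong refl) simp
  have "A = (\<Sum>u\<in>UNIV. \<Sum>v\<in>UNIV. if E v u then s v * f v u else 0)"
    unfolding A_def by (rule sum.swap)
  also have "\<dots> = (\<Sum>u\<in>UNIV. \<Sum>v\<in>UNIV. if E u v then - (s v * f u v) else 0)"
  proof (intro sum.cong refl)
    fix u v
    show "(if E v u then s v * f v u else 0) = (if E u v then - (s v * f u v) else 0)"
      using sym[of u v] sym[of v u] antisym[of u v] by auto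
  qed
  finally have "2 * A = (\<Sum>u\<in>UNIV. \<Sum>v\<in>UNIV.
                   (if E u v then s u * f u v else 0) + (if E u v then - (s v * f u v) else 0))"
    by (simp add: A_def sum.distrib)
  also have "\<dots> = (\<Sum>u\<in>UNIV. \<Sum>v\<in>UNIV. if E u v then (s u - s v) * f u v else 0)"
    by (intro sum.cong refl) (simp add: left_diff_distrib)
  also have "\<dots> = (\<Sum>u\<in>UNIV. \<Sum>v\<in>nbhd E u. (s u - s v) * f u v)"
    by (simp add: nbhd_sum)
  finally show ?thesis by (simp add: A_eq)
qed

lemma tendsto_fixed_point_of_iterates:
  fixes f :: "'a::t2_space \<Rightarrow> 'a"
  assumes "continuous_on S f" "closed S" "\<And>t. (f ^^ t) x \<in> S"
    and lim: "(\<lambda>t. (f ^^ t) x) \<longlonglongrightarrow> p"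
  shows "f p = p"
proof -
  have "p \<in> S" using Lim_in_closed_set[OF \<open>closed S\<close> _ sequentially_bot lim] assms(3) by simp
  then have "(\<lambda>t. f ((f ^^ t) x)) \<longlonglongrightarrow> f p"
    using assms by (intro continuous_on_tendsto_compose[OF \<open>continuous_on S f\<close> lim]) auto
  moreover have "(\<lambda>t. f ((f ^^ t) x)) \<longlonglongrightarrow> p"
    using LIMSEQ_Suc[OF lim] by simp
  ultimately show ?thesis by (rule LIMSEQ_unique)
qed

lemma C1_on_interval_imp_continuous_on: "C1_on_interval f S \<Longrightarrow> continuous_on S f"
  unfolding C1_on_interval_def by (auto intro: DERIV_continuous_on)

locale graph_flow =
  fixes E :: "'n::finite \<Rightarrow> 'n \<Rightarrow> bool"
    and F :: "'n \<Rightarrow> 'n \<Rightarrow> real \<Rightarrow> real"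
  assumes undirected: "\<And>u v. E u v \<Longrightarrow> E v u"
    and F_sym: "\<And>u v. E u v \<Longrightarrow> F u v = F v u"
    and F_range: "\<And>u v t. E u v \<Longrightarrow> t \<in> {-1..1} \<Longrightarrow> F u v t \<in> {-1..1}"
    and F_cont: "\<And>u v. E u v \<Longrightarrow> continuous_on {-1..1} (F u v)"
    and F_mono: "\<And>u v. E u v \<Longrightarrow> mono_on {-1..1} (F u v)"
    and F_odd: "\<And>u v t. E u v \<Longrightarrow> t \<in> {-1..1} \<Longrightarrow> F u v (- t) = - F u v t"
begin

definition edge_flow :: "real ^ 'n \<Rightarrow> 'n \<Rightarrow> 'n \<Rightarrow> real" where
  "edge_flow x u v = x $ u * x $ v * F u v (x $ u - x $ v)"

lemma gmap_component: "gmap E F x $ u = x $ u + (\<Sum>v\<in>nbhd E u. edge_flow x u v)"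
  by (simp add: gmap_def edge_flow_def)

lemma F_zero: "E u v \<Longrightarrow> F u v 0 = 0"
  using F_odd[of u v 0] by simp

lemma F_nonneg:
  assumes "E u v" "t \<in> {0..1}" shows "0 \<le> F u v t"
proof -
  have "F u v 0 \<le> F u v t" using assms by (intro mono_onD[OF F_mono]) auto
  then show ?thesis by (simp add: F_zero[OF \<open>E u v\<close>])
qed

lemma edge_flow_antisym:
  assumes "x \<in> prob_simplex" "E u v" shows "edge_flow x v u = - edge_flow x u v"
proof -
  have "F v u (x $ v - x $ u) = F u v (- (x $ u - x $ v))" using F_sym[OF \<open>E u v\<close>] by simp
  also have "\<dots> = - F u v (x $ u - x $ v)"
    using F_odd[OF \<open>E u v\<close> prob_simplex_diff_in_interval[OF \<open>x \<in> prob_simplex\<close>]] .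
  finally show ?thesis by (simp add: edge_flow_def)
qed

lemma edge_flow_nonneg:
  assumes x: "x \<in> prob_simplex" and "E u v" "x $ v \<le> x $ u"
  shows "0 \<le> edge_flow x u v"
proof -
  have "0 \<le> F u v (x $ u - x $ v)"
    using assms F_nonneg[OF \<open>E u v\<close>] prob_simplex_diff_in_interval[OF x, of u v] by simp
  then show ?thesis using prob_simplex_nonneg[OF x] by (simp add: edge_flow_def)
qed

lemma monotone_weight_diff_mult_edge_flow_nonneg:
  assumes x: "x \<in> prob_simplex" and "E u v"
    and s: "\<And>u v. x $ v < x $ u \<Longrightarrow> s v \<le> s u"
  shows "0 \<le> (s u - s v) * edge_flow x u v"
proof -
  consider "x $ u = x $ v" | "x $ v < x $ u" | "x $ u < x $ v" by linarith
  then show ?thesis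
  proof cases
    case 1
    then show ?thesis by (simp add: edge_flow_def F_zero[OF \<open>E u v\<close>])
  next
    case 2
    then show ?thesis using s[OF 2] edge_flow_nonneg[OF x \<open>E u v\<close>] by simp
  next
    case 3
    have "0 \<le> (s v - s u) * edge_flow x v u"
      using s[OF 3] edge_flow_nonneg[OF x undirected[OF \<open>E u v\<close>]] 3 by simp
    then show ?thesis using edge_flow_antisym[OF x \<open>E u v\<close>] by (simp add: algebra_simps)
  qed
qed

lemma monotone_weighted_flow_nonneg:
  assumes x: "x \<in> prob_simplex" and s: "\<And>u v. x $ v < x $ u \<Longrightarrow> s v \<le> s u"
  shows "0 \<le> (\<Sum>u\<in>UNIV. s u * (\<Sum>v\<in>nbhd E u. edge_flow x u v))"
proof -
  have "0 \<le> (\<Sum>u\<in>UNIV. \<Sum>v\<in>nbhd E u. (s u - s v) * edge_flow x u v)"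
    by (intro sum_nonneg monotone_weight_diff_mult_edge_flow_nonneg[OF x _ s]) (simp add: nbhd_def)
  also have "\<dots> = 2 * (\<Sum>u\<in>UNIV. s u * (\<Sum>v\<in>nbhd E u. edge_flow x u v))"
    by (rule sum_nbhd_antisymmetric[OF undirected edge_flow_antisym[OF x], symmetric])
  finally show ?thesis by simp
qed

lemma total_edge_flow_zero:
  assumes x: "x \<in> prob_simplex" shows "(\<Sum>u\<in>UNIV. \<Sum>v\<in>nbhd E u. edge_flow x u v) = 0"
  using sum_nbhd_antisymmetric[OF undirected edge_flow_antisym[OF x], where s = "\<lambda>_. 1"] by simp

lemma gmap_nonneg:
  assumes x: "x \<in> prob_simplex" shows "0 \<le> gmap E F x $ u"
proof -
  have "- (x $ u * x $ v) \<le> edge_flow x u v" if "v \<in> nbhd E u" for v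
  proof -
    have "-1 \<le> F u v (x $ u - x $ v)"
      using F_range[of u v] prob_simplex_diff_in_interval[OF x] that by (simp add: nbhd_def)
    then show ?thesis
      using mult_left_mono[of "-1" _ "x $ u * x $ v"] prob_simplex_nonneg[OF x]
      by (simp add: edge_flow_def)
  qed
  then have "- (\<Sum>v\<in>nbhd E u. x $ u * x $ v) \<le> (\<Sum>v\<in>nbhd E u. edge_flow x u v)"
    by (simp add: sum_mono sum_negf[symmetric])
  moreover have "(\<Sum>v\<in>nbhd E u. x $ u * x $ v) \<le> x $ u * (\<Sum>v\<in>UNIV. x $ v)"
    unfolding sum_distrib_left using prob_simplex_nonneg[OF x]
    by (intro sum_mono2) simp_all
  ultimately show ?thesis by (simp add: gmap_component prob_simplex_sum[OF x])
qed

lemma gmap_prob_simplex: "x \<in> prob_simplex \<Longrightarrow> gmap E F x \<in> prob_simplex"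
  using gmap_nonneg total_edge_flow_zero
  by (simp add: prob_simplex_def gmap_component sum.distrib)

lemma hinge_sum_le_gmap:
  assumes x: "x \<in> prob_simplex"
  shows "(\<Sum>u\<in>UNIV. max (x $ u - c) 0) \<le> (\<Sum>u\<in>UNIV. max (gmap E F x $ u - c) 0)"
proof -
  define s where "s u = (if c < x $ u then 1 else (0::real))" for u
  have "max (x $ u - c) 0 + s u * (\<Sum>v\<in>nbhd E u. edge_flow x u v) \<le> max (gmap E F x $ u - c) 0" for u
    by (auto simp: s_def gmap_component)
  then have "(\<Sum>u\<in>UNIV. max (x $ u - c) 0) + (\<Sum>u\<in>UNIV. s u * (\<Sum>v\<in>nbhd E u. edge_flow x u v))
      \<le> (\<Sum>u\<in>UNIV. max (gmap E F x $ u - c) 0)"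
    by (simp add: sum.distrib[symmetric] sum_mono)
  moreover have "0 \<le> (\<Sum>u\<in>UNIV. s u * (\<Sum>v\<in>nbhd E u. edge_flow x u v))"
    by (rule monotone_weighted_flow_nonneg[OF x]) (auto simp: s_def)
  ultimately show ?thesis by simp
qed

lemma sum_squares_gmap_ge:
  assumes x: "x \<in> prob_simplex"
  shows "(\<Sum>u\<in>UNIV. (x $ u)\<^sup>2) + (gmap E F x $ w - x $ w)\<^sup>2 \<le> (\<Sum>u\<in>UNIV. (gmap E F x $ u)\<^sup>2)"
proof -
  define d where "d u = (\<Sum>v\<in>nbhd E u. edge_flow x u v)" for u
  have "(\<Sum>u\<in>UNIV. (gmap E F x $ u)\<^sup>2)
      = (\<Sum>u\<in>UNIV. (x $ u)\<^sup>2) + 2 * (\<Sum>u\<in>UNIV. x $ u * d u) + (\<Sum>u\<in>UNIV. (d u)\<^sup>2)"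
    by (simp add: gmap_component d_def power2_sum sum.distrib sum_distrib_left mult.assoc)
  moreover have "0 \<le> (\<Sum>u\<in>UNIV. x $ u * d u)"
    unfolding d_def by (rule monotone_weighted_flow_nonneg[OF x]) simp
  moreover have "(d w)\<^sup>2 \<le> (\<Sum>u\<in>UNIV. (d u)\<^sup>2)"
    by (rule member_le_sum) simp_all
  ultimately show ?thesis by (simp add: gmap_component d_def)
qed

lemma continuous_on_gmap: "continuous_on prob_simplex (gmap E F)"
proof -
  have "continuous_on prob_simplex (\<lambda>x. F u v (x $ u - x $ v))" if "v \<in> nbhd E u" for u v
    using that prob_simplex_diff_in_interval
    by (intro continuous_on_compose2[OF F_cont] continuous_intros image_subsetI) (auto simp: nbhd_def)
  then show ?thesis
    unfolding gmap_def by (intro continuous_intros) auto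
qed

lemma funpow_gmap_prob_simplex: "x0 \<in> prob_simplex \<Longrightarrow> (gmap E F ^^ t) x0 \<in> prob_simplex"
  by (induction t) (simp_all add: gmap_prob_simplex)

lemma hinge_sum_funpow_gmap_convergent:
  assumes x0: "x0 \<in> prob_simplex"
  shows "convergent (\<lambda>t. \<Sum>w\<in>UNIV. max ((gmap E F ^^ t) x0 $ w - c) 0)"
proof -
  have "incseq (\<lambda>t. \<Sum>w\<in>UNIV. max ((gmap E F ^^ t) x0 $ w - c) 0)"
    by (rule incseq_SucI) (simp add: hinge_sum_le_gmap funpow_gmap_prob_simplex[OF x0])
  moreover have "\<forall>t. (\<Sum>w\<in>UNIV. max ((gmap E F ^^ t) x0 $ w - c) 0) \<le> (\<Sum>w\<in>(UNIV::'n set). 1 + \<bar>c\<bar>)"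
  proof (intro allI sum_mono)
    fix t w
    show "max ((gmap E F ^^ t) x0 $ w - c) 0 \<le> 1 + \<bar>c\<bar>"
      using prob_simplex_le_one[OF funpow_gmap_prob_simplex[OF x0], of t w] by (simp add: max_def, arith)
  qed
  ultimately obtain L where "(\<lambda>t. \<Sum>w\<in>UNIV. max ((gmap E F ^^ t) x0 $ w - c) 0) \<longlonglongrightarrow> L"
    by (rule incseq_convergent)
  then show ?thesis by (rule convergentI)
qed

lemma funpow_gmap_steps_tendsto_zero:
  assumes x0: "x0 \<in> prob_simplex"
  shows "(\<lambda>t. (gmap E F ^^ Suc t) x0 $ u - (gmap E F ^^ t) x0 $ u) \<longlonglongrightarrow> 0"
proof -
  define x where "x t = (gmap E F ^^ t) x0" for t
  define \<Phi> where "\<Phi> t = (\<Sum>w\<in>UNIV. (x t $ w)\<^sup>2)" for t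
  have x_in: "x t \<in> prob_simplex" for t
    by (simp add: x_def funpow_gmap_prob_simplex[OF x0])
  have step: "(x (Suc t) $ u - x t $ u)\<^sup>2 \<le> \<Phi> (Suc t) - \<Phi> t" for t
  proof -
    have "(\<Sum>w\<in>UNIV. (x t $ w)\<^sup>2) + (x (Suc t) $ u - x t $ u)\<^sup>2 \<le> (\<Sum>w\<in>UNIV. (x (Suc t) $ w)\<^sup>2)"
      using sum_squares_gmap_ge[OF x_in] by (simp add: x_def)
    then show ?thesis unfolding \<Phi>_def by linarith
  qed
  have "incseq \<Phi>"
  proof (rule incseq_SucI)
    show "\<Phi> t \<le> \<Phi> (Suc t)" for t using step[of t] zero_le_power2[of "x (Suc t) $ u - x t $ u"] by linarith
  qed
  moreover have "\<forall>t. \<Phi> t \<le> (\<Sum>w\<in>(UNIV::'n set). 1)"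
    unfolding \<Phi>_def
  proof (intro allI sum_mono)
    fix t w
    show "(x t $ w)\<^sup>2 \<le> 1"
      by (intro power_le_one prob_simplex_nonneg[OF x_in] prob_simplex_le_one[OF x_in])
  qed
  ultimately obtain L where "\<Phi> \<longlonglongrightarrow> L" by (rule incseq_convergent)
  then have "(\<lambda>t. \<Phi> (Suc t) - \<Phi> t) \<longlonglongrightarrow> L - L"
    by (intro tendsto_diff LIMSEQ_Suc)
  then have \<Phi>_increments: "(\<lambda>t. \<Phi> (Suc t) - \<Phi> t) \<longlonglongrightarrow> 0"
    by simp
  have "(\<lambda>t. (x (Suc t) $ u - x t $ u)\<^sup>2) \<longlonglongrightarrow> 0"
    by (rule tendsto_sandwich[OF _ _ tendsto_const \<Phi>_increments]) (simp_all add: step)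
  then have "(\<lambda>t. sqrt ((x (Suc t) $ u - x t $ u)\<^sup>2)) \<longlonglongrightarrow> sqrt 0"
    by (rule tendsto_real_sqrt)
  then have "(\<lambda>t. \<bar>x (Suc t) $ u - x t $ u\<bar>) \<longlonglongrightarrow> 0"
    by simp
  then show ?thesis unfolding x_def by (rule tendsto_rabs_zero_cancel)
qed

lemma funpow_gmap_convergent:
  assumes x0: "x0 \<in> prob_simplex"
  shows "convergent (\<lambda>t. (gmap E F ^^ t) x0)"
proof -
  have "convergent (\<lambda>t. (gmap E F ^^ t) x0 $ u)" for u
  proof (rule convergent_coordinate_if_hinge_sums_convergent)
    show "Bseq (\<lambda>t. (gmap E F ^^ t) x0 $ u)"
      using prob_simplex_nonneg[OF funpow_gmap_prob_simplex[OF x0]]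
        prob_simplex_le_one[OF funpow_gmap_prob_simplex[OF x0]]
      by (intro BseqI'[where K = 1]) auto
  qed (use hinge_sum_funpow_gmap_convergent funpow_gmap_steps_tendsto_zero x0 in auto)
  then obtain l where "\<And>u. (\<lambda>t. (gmap E F ^^ t) x0 $ u) \<longlonglongrightarrow> l u"
    unfolding convergent_def by metis
  then have "(\<lambda>t. (gmap E F ^^ t) x0) \<longlonglongrightarrow> (\<chi> u. l u)" by (intro vec_tendstoI) simp
  then show ?thesis by (auto simp: convergent_def)
qed

end

theorem mainTheorem4:
  fixes E :: "'n::finite \<Rightarrow> 'n \<Rightarrow> bool"
    and F :: "'n \<Rightarrow> 'n \<Rightarrow> real \<Rightarrow> real"
    and x0 :: "real ^ 'n"
  assumes undirected: "\<And>u v. E u v \<Longrightarrow> E v u"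
    and F_sym: "\<And>u v. E u v \<Longrightarrow> F u v = F v u"
    and F_range: "\<And>u v t. E u v \<Longrightarrow> t \<in> {-1..1} \<Longrightarrow> F u v t \<in> {-1..1}"
    and F_C1: "\<And>u v. E u v \<Longrightarrow> C1_on_interval (F u v) {-1..1}"
    and F_zero: "\<And>u v. E u v \<Longrightarrow> F u v 0 = 0"
    and F_incr: "\<And>u v. E u v \<Longrightarrow> strict_mono_on {-1..1} (F u v)"
    and F_odd: "\<And>u v t. E u v \<Longrightarrow> t \<in> {-1..1} \<Longrightarrow> F u v (- t) = - F u v t"
    and x0: "x0 \<in> prob_simplex"
  shows "\<exists>p. ((\<lambda>t. (gmap E F ^^ t) x0) \<longlongrightarrow> p) sequentially \<and> gmap E F p = p"
proof -
  \<comment> \<open>\<open>F_zero\<close> is implied by \<open>F_odd\<close>; of \<open>F_C1\<close> and \<open>F_incr\<close> only continuity and monotonicity are needed.\<close>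
  interpret graph_flow E F
  proof unfold_locales
    fix u v assume "E u v"
    show "continuous_on {-1..1} (F u v)"
      by (rule C1_on_interval_imp_continuous_on[OF F_C1[OF \<open>E u v\<close>]])
    show "mono_on {-1..1} (F u v)"
      by (rule strict_mono_on_imp_mono_on[OF F_incr[OF \<open>E u v\<close>]])
  qed (fact undirected F_sym F_range F_odd)+
  obtain p where lim: "(\<lambda>t. (gmap E F ^^ t) x0) \<longlonglongrightarrow> p"
    using funpow_gmap_convergent[OF x0] by (auto simp: convergent_def)
  have "gmap E F p = p"
    using continuous_on_gmap closed_prob_simplex funpow_gmap_prob_simplex[OF x0] lim
    by (rule tendsto_fixed_point_of_iterates)
  with lim show ?thesis by blast
qed

end
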